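(* Let $\mu$ be a probability measure on $\mathbb{R}$ that is dimension regular: there exist a $\mu$-measurable function $\alpha(x)$ and strictly positive constants $C$, $c$, $t_0$ such that for every $x$ in the support of $\mu$ and all $0<t<t_0$, $$ct^{\alpha(x)}\le\mu[x-t/2,x+t/2]\le Ct^{\alpha(x)}.$$ Then $\delta_c(\mu)=\int\alpha(x)\,d\mu(x)$.
   Context: For $t>0$, $\nu_t$ is the centered Gaussian law on $\mathbb{R}$ with variance $t^2$, $\mu_t=\mu*\nu_t$, and $H(p\,dx)=\int p\log p\,dx$. Define $$\delta_c(\mu)=1-\liminf_{t\to0}\frac{H(\mu_t)}{|\log t|}.$$ *)

theory Defs
  imports "HOL-Probability.Probability"
begin

text \<open>Density of mu_t = mu * nu_t, where nu_t is the centred Gaussian with variance t^2.\<close>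
definition gauss_smooth_density :: "real measure \<Rightarrow> real \<Rightarrow> real \<Rightarrow> real" where
  "gauss_smooth_density \<mu> t x = (\<integral>y. normal_density 0 t (x - y) \<partial>\<mu>)"

text \<open>Differential entropy H(p dx) = integral of p log p dx, taken in the extended reals
  as (positive part) minus (negative part), so that the value minus infinity is allowed.\<close>
definition diff_entropy :: "(real \<Rightarrow> real) \<Rightarrow> ereal" where
  "diff_entropy p =
     enn2ereal (\<integral>\<^sup>+ x. ennreal (max 0 (p x * ln (p x))) \<partial>lborel)
   - enn2ereal (\<integral>\<^sup>+ x. ennreal (max 0 (- (p x * ln (p x)))) \<partial>lborel)"

definition delta_c :: "real measure \<Rightarrow> ereal" where
  "delta_c \<mu> = 1 - Liminf (at_right 0)
      (\<lambda>t. diff_entropy (gauss_smooth_density \<mu> t) / ereal \<bar>ln t\<bar>)"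

definition measure_support :: "real measure \<Rightarrow> real set" where
  "measure_support \<mu> = {x. \<forall>e>0. emeasure \<mu> (ball x e) > 0}"

end

theory Submission
  imports Defs "HOL-Real_Asymp.Real_Asymp"
begin

(* Near a point y of the support, at scale t, the smoothed density behaves like
   t^(alpha(y) - 1). Bounding mu_t(x) from below by the mass c t^alpha(y) of the window of
   width t around y, and from above by the mass of the window of half-width t sqrt(2 |ln t|)
   around x (outside of which the Gaussian kernel is O(1)), gives

     ln mu_t(x) = (alpha(y) - 1) ln t + O(1 + ln(1 + sqrt |ln t|) + ((x - y) / t)^2).

   Since mu_t ln mu_t (x) = int phi_t(x - y) ln mu_t(x) dmu(y), integrating these bounds in x
   against the Gaussian centred at y and then in y yields
   H(mu_t) = (int alpha dmu - 1) ln t + O(ln(1 + sqrt |ln t|)).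
   This needs 0 <= alpha <= 1 mu-almost everywhere: alpha >= 0 on the support because masses
   are at most 1, and {alpha >= 1 + eps} inside [-R, R] is covered by O(R / t) windows of
   width t/2, each of mass at most C t^(1 + eps). *)

lemma compl_measure_support:
  assumes "sets M = sets borel"
  shows "- measure_support M = \<Union>{ball x e |x e. emeasure M (ball x e) = 0}"
proof (intro equalityI subsetI)
  fix z assume "z \<in> - measure_support M"
  then obtain e where "e > 0" "emeasure M (ball z e) = 0"
    by (auto simp: measure_support_def not_less)
  then show "z \<in> \<Union>{ball x e |x e. emeasure M (ball x e) = 0}"
    using centre_in_ball by blast
next
  fix z assume "z \<in> \<Union>{ball x e |x e. emeasure M (ball x e) = 0}"
  then obtain x e where z: "z \<in> ball x e" and null: "emeasure M (ball x e) = 0"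
    by auto
  have "ball z (e - dist x z) \<subseteq> ball x e"
    by (simp add: ball_subset_ball_iff dist_commute)
  then have "emeasure M (ball z (e - dist x z)) \<le> emeasure M (ball x e)"
    using assms by (intro emeasure_mono) auto
  then have "emeasure M (ball z (e - dist x z)) = 0"
    using null by simp
  then show "z \<in> - measure_support M"
    using z by (auto simp: measure_support_def intro!: exI[of _ "e - dist x z"])
qed

lemma closed_measure_support:
  assumes "sets M = sets borel"
  shows "closed (measure_support M)"
  by (auto simp: closed_def compl_measure_support[OF assms])

lemma AE_in_measure_support:
  assumes "sets M = sets borel"
  shows "AE x in M. x \<in> measure_support M"
proof -
  obtain \<F> where \<F>: "\<F> \<subseteq> {ball x e |x e. emeasure M (ball x e) = 0}" "countable \<F>"
      and "\<Union>\<F> = - measure_support M"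
    using Lindelof[of "{ball x e |x e. emeasure M (ball x e) = 0}"]
    by (auto simp: compl_measure_support[OF assms])
  moreover have "(\<Union>B\<in>\<F>. B) \<in> null_sets M"
    using \<F> assms by (intro null_sets_UN') (auto simp: null_sets_def)
  ultimately show ?thesis
    by (auto intro: AE_I'[of "\<Union>\<F>"])
qed

lemma measure_support_nonempty:
  assumes "prob_space M" and "sets M = sets borel"
  shows "measure_support M \<noteq> {}"
  using AE_in_measure_support[OF assms(2)] prob_space.AE_False[OF assms(1)] by auto

lemma normal_density_0_diff: "normal_density 0 \<sigma> (x - y) = normal_density y \<sigma> x"
  by (simp add: normal_density_def)

lemma normal_density_eq:
  assumes "0 < \<sigma>"
  shows "normal_density \<mu> \<sigma> x = exp (- (x - \<mu>)\<^sup>2 / (2 * \<sigma>\<^sup>2)) / (\<sigma> * sqrt (2 * pi))"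
  using assms by (simp add: normal_density_def real_sqrt_mult)

lemma normal_density_le:
  assumes "0 < \<sigma>"
  shows "normal_density \<mu> \<sigma> x \<le> 1 / (\<sigma> * sqrt (2 * pi))"
  using assms by (simp add: normal_density_eq divide_right_mono)

lemma normal_density_0_antimono:
  assumes "\<bar>u\<bar> \<le> \<bar>v\<bar>"
  shows "normal_density 0 \<sigma> v \<le> normal_density 0 \<sigma> u"
proof -
  have "u\<^sup>2 \<le> v\<^sup>2"
    using assms by (simp add: abs_le_square_iff)
  then have "- v\<^sup>2 / (2 * \<sigma>\<^sup>2) \<le> - u\<^sup>2 / (2 * \<sigma>\<^sup>2)"
    by (intro divide_right_mono) auto
  then show ?thesis
    unfolding normal_density_def by (intro mult_left_mono) auto
qed

lemma normal_density_tail_le: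
  assumes "0 < \<sigma>" "\<sigma> < 1" and "\<sigma> * sqrt (2 * - ln \<sigma>) \<le> \<bar>x\<bar>"
  shows "normal_density 0 \<sigma> x \<le> 1 / sqrt (2 * pi)"
proof -
  have "(\<sigma> * sqrt (2 * - ln \<sigma>))\<^sup>2 \<le> \<bar>x\<bar>\<^sup>2"
    using assms by (intro power_mono) auto
  then have "- ln \<sigma> \<le> x\<^sup>2 / (2 * \<sigma>\<^sup>2)"
    using assms by (simp add: power_mult_distrib field_simps)
  then have "exp (- x\<^sup>2 / (2 * \<sigma>\<^sup>2)) \<le> exp (ln \<sigma>)"
    by simp
  then have "exp (- x\<^sup>2 / (2 * \<sigma>\<^sup>2)) \<le> \<sigma>"
    using assms by simp
  then show ?thesis
    using assms by (simp add: normal_density_eq divide_right_mono field_simps)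
qed

lemma
  assumes "0 < \<sigma>"
  shows integrable_normal_density_quadratic:
      "integrable lborel (\<lambda>x. normal_density \<mu> \<sigma> x * (a + b * ((x - \<mu>) / \<sigma>)\<^sup>2))"
    and integral_normal_density_quadratic:
      "(\<integral>x. normal_density \<mu> \<sigma> x * (a + b * ((x - \<mu>) / \<sigma>)\<^sup>2) \<partial>lborel) = a + b"
proof -
  have eq: "(\<lambda>x. normal_density \<mu> \<sigma> x * (a + b * ((x - \<mu>) / \<sigma>)\<^sup>2)) =
      (\<lambda>x. a * normal_density \<mu> \<sigma> x + (b / \<sigma>\<^sup>2) * (normal_density \<mu> \<sigma> x * (x - \<mu>) ^ 2))"
    using assms by (auto simp: fun_eq_iff field_simps power_divide)
  have moment: "integrable lborel (\<lambda>x. normal_density \<mu> \<sigma> x * (x - \<mu>) ^ 2)"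
    using integrable_normal_moment[OF assms] by simp
  show "integrable lborel (\<lambda>x. normal_density \<mu> \<sigma> x * (a + b * ((x - \<mu>) / \<sigma>)\<^sup>2))"
    unfolding eq using moment integrable_normal_density[OF assms] by simp
  have "(\<integral>x. normal_density \<mu> \<sigma> x * (x - \<mu>) ^ 2 \<partial>lborel) = \<sigma>\<^sup>2"
    using integral_normal_moment_even[OF assms, of \<mu> 1] by (simp add: power2_eq_square)
  then show "(\<integral>x. normal_density \<mu> \<sigma> x * (a + b * ((x - \<mu>) / \<sigma>)\<^sup>2) \<partial>lborel) = a + b"
    unfolding eq using moment assms by simp
qed

lemma integrable_gauss_kernel:
  assumes "finite_measure M" "sets M = sets borel" "0 < t"
  shows "integrable M (\<lambda>y. normal_density 0 t (x - y))"
  using assms normal_density_le[OF assms(3)]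
  by (intro finite_measure.integrable_const_bound[where B="1 / (t * sqrt (2 * pi))"]) auto

lemma borel_measurable_gauss_smooth_density:
  assumes "finite_measure M" "sets M = sets borel"
  shows "gauss_smooth_density M t \<in> borel_measurable borel"
  unfolding gauss_smooth_density_def[abs_def] using assms
  by (intro sigma_finite_measure.borel_measurable_lebesgue_integral finite_measure.sigma_finite_measure)
    auto

lemma gauss_smooth_density_lower:
  assumes "finite_measure M" "sets M = sets borel" "0 < t" "0 \<le> s"
  shows "measure M {y - s .. y + s} * normal_density 0 t (\<bar>x - y\<bar> + s) \<le> gauss_smooth_density M t x"
proof -
  let ?I = "{y - s .. y + s}"
  have "indicator ?I z * normal_density 0 t (\<bar>x - y\<bar> + s) \<le> normal_density 0 t (x - z)" for z
    by (cases "z \<in> ?I") (auto intro!: normal_density_0_antimono)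
  then have "(\<integral>z. indicator ?I z * normal_density 0 t (\<bar>x - y\<bar> + s) \<partial>M) \<le> gauss_smooth_density M t x"
    unfolding gauss_smooth_density_def using assms
    by (intro integral_mono integrable_gauss_kernel
        finite_measure.integrable_const_bound[where B="normal_density 0 t (\<bar>x - y\<bar> + s)"])
      (auto simp: indicator_def)
  then show ?thesis
    using assms finite_measure.emeasure_eq_measure by simp
qed

lemma gauss_smooth_density_upper:
  assumes "prob_space M" "sets M = sets borel" "0 < t" "t < 1"
  defines "r \<equiv> t * sqrt (2 * - ln t)"
  shows "gauss_smooth_density M t x \<le> (measure M {x - r .. x + r} + t) / (t * sqrt (2 * pi))"
proof -
  interpret prob_space M by fact
  let ?I = "{x - r .. x + r}" and ?A = "1 / (t * sqrt (2 * pi))"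
  have "normal_density 0 t (x - z) \<le> indicator ?I z * ?A + t * ?A" for z
  proof (cases "z \<in> ?I")
    case True
    moreover have "0 \<le> t * ?A"
      using assms by simp
    ultimately show ?thesis
      using normal_density_le[OF assms(3), of 0 "x - z"] by simp
  next
    case False
    then have "r \<le> \<bar>x - z\<bar>" by auto
    then show ?thesis
      using normal_density_tail_le[of t "x - z"] assms False by (simp add: r_def)
  qed
  then have "gauss_smooth_density M t x \<le> (\<integral>z. indicator ?I z * ?A + t * ?A \<partial>M)"
    unfolding gauss_smooth_density_def using assms
    by (intro integral_mono integrable_gauss_kernel finite_measure_axioms
        Bochner_Integration.integrable_add integrable_mult_left integrable_real_indicator) (auto simp: less_top[symmetric])
  also have "\<dots> = (measure M ?I + t) * ?A"
    using assms by (simp add: emeasure_eq_measure prob_space algebra_simps)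
  finally show ?thesis by simp
qed

lemma
  fixes g :: "real \<Rightarrow> real"
  assumes "0 < \<sigma>" and g[measurable]: "g \<in> borel_measurable borel"
    and lower: "\<And>x. l - a * ((x - \<mu>) / \<sigma>)\<^sup>2 \<le> g x"
    and upper: "\<And>x. g x \<le> u + b * ((x - \<mu>) / \<sigma>)\<^sup>2"
  shows integrable_normal_density_mult: "integrable lborel (\<lambda>x. normal_density \<mu> \<sigma> x * g x)"
    and integral_normal_density_mult_ge: "l - a \<le> (\<integral>x. normal_density \<mu> \<sigma> x * g x \<partial>lborel)"
    and integral_normal_density_mult_le: "(\<integral>x. normal_density \<mu> \<sigma> x * g x \<partial>lborel) \<le> u + b"
    and integral_norm_normal_density_mult_le:
      "(\<integral>x. norm (normal_density \<mu> \<sigma> x * g x) \<partial>lborel) \<le> \<bar>l\<bar> + \<bar>u\<bar> + (\<bar>a\<bar> + \<bar>b\<bar>)"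
proof -
  let ?q = "\<lambda>x. ((x - \<mu>) / \<sigma>)\<^sup>2"
  let ?B = "\<lambda>x. normal_density \<mu> \<sigma> x * (\<bar>l\<bar> + \<bar>u\<bar> + (\<bar>a\<bar> + \<bar>b\<bar>) * ?q x)"
  have "\<bar>g x\<bar> \<le> \<bar>l\<bar> + \<bar>u\<bar> + (\<bar>a\<bar> + \<bar>b\<bar>) * ?q x" for x
    using lower[of x] upper[of x] zero_le_power2[of "(x - \<mu>) / \<sigma>"]
      abs_ge_self[of a] abs_ge_self[of b] abs_ge_minus_self[of a] abs_ge_minus_self[of b]
    by (intro abs_leI) (smt (verit) mult_right_mono)+
  then have norm_le: "norm (normal_density \<mu> \<sigma> x * g x) \<le> ?B x" for x
    by (simp add: abs_mult mult_left_mono)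
  show integrable: "integrable lborel (\<lambda>x. normal_density \<mu> \<sigma> x * g x)"
  proof (rule Bochner_Integration.integrable_bound)
    show "integrable lborel ?B"
      using \<open>0 < \<sigma>\<close> by (rule integrable_normal_density_quadratic)
    show "AE x in lborel. norm (normal_density \<mu> \<sigma> x * g x) \<le> norm (?B x)"
      using norm_le by (intro AE_I2) (metis abs_ge_self order_trans real_norm_def)
  qed measurable
  show "(\<integral>x. norm (normal_density \<mu> \<sigma> x * g x) \<partial>lborel)
      \<le> \<bar>l\<bar> + \<bar>u\<bar> + (\<bar>a\<bar> + \<bar>b\<bar>)"
    using integral_mono[OF integrable_norm[OF integrable] integrable_normal_density_quadratic[OF \<open>0 < \<sigma>\<close>] norm_le]
      integral_normal_density_quadratic[OF \<open>0 < \<sigma>\<close>] by simp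
  have "l - a = (\<integral>x. normal_density \<mu> \<sigma> x * (l + (- a) * ?q x) \<partial>lborel)"
    using integral_normal_density_quadratic[OF \<open>0 < \<sigma>\<close>, of \<mu> l "- a"] by simp
  also have "\<dots> \<le> (\<integral>x. normal_density \<mu> \<sigma> x * g x \<partial>lborel)"
    using lower \<open>0 < \<sigma>\<close>
    by (intro integral_mono integrable_normal_density_quadratic integrable mult_left_mono) auto
  finally show "l - a \<le> (\<integral>x. normal_density \<mu> \<sigma> x * g x \<partial>lborel)" .
  have "(\<integral>x. normal_density \<mu> \<sigma> x * g x \<partial>lborel)
      \<le> (\<integral>x. normal_density \<mu> \<sigma> x * (u + b * ?q x) \<partial>lborel)"
    using upper \<open>0 < \<sigma>\<close>
    by (intro integral_mono integrable_normal_density_quadratic integrable mult_left_mono) auto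
  also have "\<dots> = u + b"
    using integral_normal_density_quadratic[OF \<open>0 < \<sigma>\<close>] by simp
  finally show "(\<integral>x. normal_density \<mu> \<sigma> x * g x \<partial>lborel) \<le> u + b" .
qed

lemma integrable_gauss_kernel_mult_ln:
  fixes M :: "real measure" and L U :: "real \<Rightarrow> real" and a b t :: real
  defines "p \<equiv> gauss_smooth_density M t"
  assumes "prob_space M" "sets M = sets borel" "0 < t"
    and L: "integrable M L" and U: "integrable M U"
    and bounds: "AE y in M. \<forall>x. L y - a * ((x - y) / t)\<^sup>2 \<le> ln (p x)
                                \<and> ln (p x) \<le> U y + b * ((x - y) / t)\<^sup>2"
  shows "integrable (M \<Otimes>\<^sub>M lborel) (\<lambda>(y, x). normal_density 0 t (x - y) * ln (p x))"
proof -
  interpret M: prob_space M by fact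
  interpret pair_sigma_finite M lborel
    by (intro pair_sigma_finite.intro M.sigma_finite_measure lborel.sigma_finite_measure_axioms)
  note sets_M[measurable_cong] = \<open>sets M = sets borel\<close>
  have [measurable]: "p \<in> borel_measurable borel"
    unfolding p_def using assms by (intro borel_measurable_gauss_smooth_density M.finite_measure_axioms)
  define G where "G y x = normal_density 0 t (x - y) * ln (p x)" for y x
  have G_bounds: "AE y in M. integrable lborel (G y)
      \<and> (\<integral>x. norm (G y x) \<partial>lborel) \<le> \<bar>L y\<bar> + \<bar>U y\<bar> + (\<bar>a\<bar> + \<bar>b\<bar>)"
    using bounds
  proof eventually_elim
    case (elim y)
    show ?case
      unfolding G_def normal_density_0_diff using elim \<open>0 < t\<close>
      by (intro conjI integrable_normal_density_mult integral_norm_normal_density_mult_le) auto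
  qed
  have "integrable M (\<lambda>y. \<integral>x. norm (G y x) \<partial>lborel)"
  proof (rule Bochner_Integration.integrable_bound)
    show "integrable M (\<lambda>y. \<bar>L y\<bar> + \<bar>U y\<bar> + (\<bar>a\<bar> + \<bar>b\<bar>))"
      using L U by simp
    show "AE y in M. norm (\<integral>x. norm (G y x) \<partial>lborel)
        \<le> norm (\<bar>L y\<bar> + \<bar>U y\<bar> + (\<bar>a\<bar> + \<bar>b\<bar>))"
      using G_bounds by eventually_elim auto
  qed (unfold G_def, measurable)
  then show ?thesis
    using G_bounds unfolding G_def by (intro Fubini_integrable) (auto elim: AE_mp)
qed

lemma entropy_gauss_smooth_density_bounds:
  fixes M :: "real measure" and L U :: "real \<Rightarrow> real" and a b t :: real
  defines "p \<equiv> gauss_smooth_density M t"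
  assumes "prob_space M" "sets M = sets borel" "0 < t"
    and L: "integrable M L" and U: "integrable M U"
    and bounds: "AE y in M. \<forall>x. L y - a * ((x - y) / t)\<^sup>2 \<le> ln (p x)
                                \<and> ln (p x) \<le> U y + b * ((x - y) / t)\<^sup>2"
  shows "integrable lborel (\<lambda>x. p x * ln (p x))"
    and "(\<integral>y. L y \<partial>M) - a \<le> (\<integral>x. p x * ln (p x) \<partial>lborel)"
    and "(\<integral>x. p x * ln (p x) \<partial>lborel) \<le> (\<integral>y. U y \<partial>M) + b"
proof -
  interpret M: prob_space M by fact
  interpret pair_sigma_finite M lborel
    by (intro pair_sigma_finite.intro M.sigma_finite_measure lborel.sigma_finite_measure_axioms)
  have [measurable]: "p \<in> borel_measurable borel"
    unfolding p_def using assms by (intro borel_measurable_gauss_smooth_density M.finite_measure_axioms)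
  (* p ln p is the y-marginal of G, so Fubini reduces the claim to Gaussian integrals in x. *)
  define G where "G y x = normal_density 0 t (x - y) * ln (p x)" for y x
  have G_integrable: "integrable (M \<Otimes>\<^sub>M lborel) (\<lambda>(y, x). G y x)"
    using assms(2-) unfolding G_def p_def by (rule integrable_gauss_kernel_mult_ln)
  have G_bounds: "AE y in M. L y - a \<le> (\<integral>x. G y x \<partial>lborel) \<and> (\<integral>x. G y x \<partial>lborel) \<le> U y + b"
    using bounds
  proof eventually_elim
    case (elim y)
    show ?case
      unfolding G_def normal_density_0_diff using elim \<open>0 < t\<close>
      by (intro conjI integral_normal_density_mult_ge integral_normal_density_mult_le) auto
  qed
  have inner: "(\<integral>y. G y x \<partial>M) = p x * ln (p x)" for x
    unfolding G_def p_def gauss_smooth_density_def by simp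
  show "integrable lborel (\<lambda>x. p x * ln (p x))"
    using integrable_snd[OF G_integrable] unfolding inner .
  have Fubini: "(\<integral>x. p x * ln (p x) \<partial>lborel) = (\<integral>y. (\<integral>x. G y x \<partial>lborel) \<partial>M)"
    using Fubini_integral[OF G_integrable] unfolding inner .
  have "(\<integral>y. L y \<partial>M) - a = (\<integral>y. L y - a \<partial>M)"
    using L by (simp add: M.prob_space)
  also have "\<dots> \<le> (\<integral>x. p x * ln (p x) \<partial>lborel)"
    unfolding Fubini using G_bounds L
    by (intro integral_mono_AE integrable_fst[OF G_integrable]) (auto elim: AE_mp)
  finally show "(\<integral>y. L y \<partial>M) - a \<le> (\<integral>x. p x * ln (p x) \<partial>lborel)" .
  have "(\<integral>x. p x * ln (p x) \<partial>lborel) \<le> (\<integral>y. U y + b \<partial>M)"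
    unfolding Fubini using G_bounds U
    by (intro integral_mono_AE integrable_fst[OF G_integrable]) (auto elim: AE_mp)
  also have "\<dots> = (\<integral>y. U y \<partial>M) + b"
    using U by (simp add: M.prob_space)
  finally show "(\<integral>x. p x * ln (p x) \<partial>lborel) \<le> (\<integral>y. U y \<partial>M) + b" .
qed

lemma measure_le_by_interval_cover:
  assumes "finite_measure M" "sets M = sets borel" "E \<in> sets M"
    and "E \<subseteq> {-R .. R}" "0 \<le> R" "0 < s"
    and pieces: "\<And>a. measure M (E \<inter> {a .. a + s}) \<le> m"
  shows "measure M E \<le> (2 * R / s + 2) * m"
proof -
  interpret finite_measure M by fact
  define K where "K = {\<lfloor>-R / s\<rfloor> .. \<lfloor>R / s\<rfloor>}"
  define J where "J k = E \<inter> {of_int k * s .. of_int k * s + s}" for k :: int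
  have J_sets: "J k \<in> sets M" for k
    using assms by (simp add: J_def)
  have "E \<subseteq> (\<Union>k\<in>K. J k)"
  proof
    fix x assume x: "x \<in> E"
    define k where "k = \<lfloor>x / s\<rfloor>"
    have "of_int k \<le> x / s" "x / s \<le> of_int k + 1"
      unfolding k_def by linarith+
    then have window: "of_int k * s \<le> x" "x \<le> of_int k * s + s"
      using \<open>0 < s\<close> by (simp_all add: field_simps)
    have "-R \<le> x" "x \<le> R"
      using x assms(4) by auto
    then have "-R / s \<le> x / s" "x / s \<le> R / s"
      using \<open>0 < s\<close> by (simp_all add: field_simps)
    then have "k \<in> K"
      unfolding K_def k_def by (auto intro!: floor_mono)
    then show "x \<in> (\<Union>k\<in>K. J k)"
      using x window by (auto simp: J_def)
  qed
  then have "measure M E \<le> measure M (\<Union>k\<in>K. J k)"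
    using J_sets by (intro finite_measure_mono) auto
  also have "\<dots> \<le> (\<Sum>k\<in>K. measure M (J k))"
    using J_sets by (intro finite_measure_subadditive_finite) (auto simp: K_def)
  also have "\<dots> \<le> real (card K) * m"
    using sum_mono[of K "\<lambda>k. measure M (J k)" "\<lambda>_. m"] pieces by (simp add: J_def)
  also have "\<dots> \<le> (2 * R / s + 2) * m"
  proof (rule mult_right_mono)
    have "0 \<le> R / s" "- R / s \<le> 0"
      using assms by auto
    then have "real (card K) = of_int \<lfloor>R / s\<rfloor> - of_int \<lfloor>-R / s\<rfloor> + 1"
      unfolding K_def by (simp add: floor_mono[of "- R / s" "R / s", simplified] of_nat_nat)
    also have "\<dots> \<le> 2 * R / s + 2"
      by linarith
    finally show "real (card K) \<le> 2 * R / s + 2" .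
    show "0 \<le> m"
      using pieces[of 0] measure_nonneg order_trans by blast
  qed
  finally show ?thesis .
qed

lemma diff_entropy_eq_integral:
  assumes "integrable lborel (\<lambda>x. p x * ln (p x))"
  shows "diff_entropy p = ereal (\<integral>x. p x * ln (p x) \<partial>lborel)"
proof -
  let ?f = "\<lambda>x. p x * ln (p x)"
  have finite: "(\<integral>\<^sup>+ x. ennreal (g x) \<partial>lborel) < \<infinity>" if "\<And>x. g x \<le> \<bar>?f x\<bar>" for g
  proof -
    have "(\<integral>\<^sup>+ x. ennreal (g x) \<partial>lborel) \<le> (\<integral>\<^sup>+ x. ennreal (norm (?f x)) \<partial>lborel)"
      using that by (intro nn_integral_mono ennreal_leI) simp
    also have "\<dots> < \<infinity>"
      using assms by (simp add: integrable_iff_bounded)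
    finally show ?thesis .
  qed
  obtain A B where "(\<integral>\<^sup>+ x. ennreal (?f x) \<partial>lborel) = ennreal A" "0 \<le> A"
      and "(\<integral>\<^sup>+ x. ennreal (- ?f x) \<partial>lborel) = ennreal B" "0 \<le> B"
    using finite[of ?f, OF abs_ge_self] finite[of "\<lambda>x. - ?f x", OF abs_ge_minus_self]
    by (auto simp: less_top_ennreal)
  then have "diff_entropy p = ereal (enn2real (\<integral>\<^sup>+ x. ennreal (?f x) \<partial>lborel)
      - enn2real (\<integral>\<^sup>+ x. ennreal (- ?f x) \<partial>lborel))"
    unfolding diff_entropy_def ennreal_max_0 by simp
  also have "\<dots> = ereal (\<integral>x. ?f x \<partial>lborel)"
    using real_lebesgue_integral_def[OF assms] by simp
  finally show ?thesis .
qed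

lemma delta_c_eqI:
  assumes integrable: "\<forall>\<^sub>F t in at_right 0.
      integrable lborel (\<lambda>x. gauss_smooth_density \<mu> t x * ln (gauss_smooth_density \<mu> t x))"
    and limit: "((\<lambda>t. (\<integral>x. gauss_smooth_density \<mu> t x * ln (gauss_smooth_density \<mu> t x) \<partial>lborel) / \<bar>ln t\<bar>)
        \<longlongrightarrow> 1 - d) (at_right 0)"
  shows "delta_c \<mu> = ereal d"
proof -
  have "\<forall>\<^sub>F t in at_right 0. 0 < t \<and> t < (1::real)"
    using eventually_at_right_real[of 0 1] by simp
  with integrable have "\<forall>\<^sub>F t in at_right 0. diff_entropy (gauss_smooth_density \<mu> t) / ereal \<bar>ln t\<bar> =
      ereal ((\<integral>x. gauss_smooth_density \<mu> t x * ln (gauss_smooth_density \<mu> t x) \<partial>lborel) / \<bar>ln t\<bar>)"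
    by eventually_elim (simp add: diff_entropy_eq_integral ereal_divide)
  then have "((\<lambda>t. diff_entropy (gauss_smooth_density \<mu> t) / ereal \<bar>ln t\<bar>) \<longlongrightarrow> ereal (1 - d)) (at_right 0)"
    using tendsto_ereal[OF limit] by (simp add: tendsto_cong)
  then show ?thesis
    unfolding delta_c_def by (simp add: lim_imp_Liminf one_ereal_def)
qed

lemma ln_add_twice_le:
  fixes a d :: real
  assumes "1 \<le> a" "0 \<le> d"
  shows "ln (a + 2 * d) \<le> ln a + 1 + d\<^sup>2"
proof -
  have "ln (a + 2 * d) \<le> ln (a * (1 + 2 * d))"
    using assms mult_right_mono[of 1 a d] by (intro ln_mono) (auto simp: algebra_simps)
  also have "\<dots> = ln a + ln (1 + 2 * d)"
    using assms by (simp add: ln_mult)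
  also have "ln (1 + 2 * d) \<le> 2 * d"
    using assms by (intro ln_add_one_self_le_self) simp
  also have "2 * d \<le> 1 + d\<^sup>2"
    using sum_squares_ge_zero[of "d - 1" 0] by (simp add: power2_eq_square algebra_simps)
  finally show ?thesis
    by simp
qed

lemma tendsto_div_abs_ln_at_right_0:
  fixes h :: "real \<Rightarrow> real"
  assumes bounds: "\<forall>\<^sub>F t in at_right 0. k\<^sub>1 + (d - 1) * ln t \<le> h t
      \<and> h t \<le> k\<^sub>2 + ln (1 + 2 * sqrt (2 * - ln t)) + (d - 1) * ln t"
  shows "((\<lambda>t. h t / \<bar>ln t\<bar>) \<longlongrightarrow> 1 - d) (at_right 0)"
proof -
  let ?e = "\<lambda>t. ln (1 + 2 * sqrt (2 * - ln t))"
  have sandwich: "\<forall>\<^sub>F t in at_right 0. (1 - d) + k\<^sub>1 / \<bar>ln t\<bar> \<le> h t / \<bar>ln t\<bar>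
      \<and> h t / \<bar>ln t\<bar> \<le> (1 - d) + (k\<^sub>2 / \<bar>ln t\<bar> + ?e t / \<bar>ln t\<bar>)"
    using bounds eventually_at_right_real[of 0 "1::real", simplified]
  proof eventually_elim
    case (elim t)
    then have ln_t: "\<bar>ln t\<bar> = - ln t" "0 < - ln t"
      by auto
    have "(k\<^sub>1 + (d - 1) * ln t) / - ln t \<le> h t / - ln t"
        "h t / - ln t \<le> (k\<^sub>2 + ?e t + (d - 1) * ln t) / - ln t"
      using elim ln_t(2) less_imp_le divide_right_mono by blast+
    moreover have "(k\<^sub>1 + (d - 1) * ln t) / - ln t = (1 - d) + k\<^sub>1 / - ln t"
        "(k\<^sub>2 + ?e t + (d - 1) * ln t) / - ln t = (1 - d) + (k\<^sub>2 / - ln t + ?e t / - ln t)"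
      using ln_t(2) by (simp_all add: field_simps)
    ultimately show ?case
      unfolding ln_t(1) by simp
  qed
  have vanishing: "((\<lambda>t. k / \<bar>ln t\<bar>) \<longlongrightarrow> 0) (at_right 0)" for k :: real
  proof (rule tendsto_divide_0[OF tendsto_const filterlim_at_top_imp_at_infinity])
    show "filterlim (\<lambda>t. \<bar>ln t\<bar>) at_top (at_right (0::real))"
      by real_asymp
  qed
  have log_vanishing: "((\<lambda>t. ?e t / \<bar>ln t\<bar>) \<longlongrightarrow> 0) (at_right 0)"
    by real_asymp
  have lower: "((\<lambda>t. (1 - d) + k\<^sub>1 / \<bar>ln t\<bar>) \<longlongrightarrow> 1 - d) (at_right 0)"
    using tendsto_add[OF tendsto_const vanishing[of k\<^sub>1]] by simp
  have upper: "((\<lambda>t. (1 - d) + (k\<^sub>2 / \<bar>ln t\<bar> + ?e t / \<bar>ln t\<bar>)) \<longlongrightarrow> 1 - d) (at_right 0)"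
    using tendsto_add[OF tendsto_const tendsto_add[OF vanishing[of k\<^sub>2] log_vanishing]] by simp
  show ?thesis
    using sandwich unfolding eventually_conj_iff by (blast intro: tendsto_sandwich[OF _ _ lower upper])
qed

locale dimension_regular = prob_space M for M :: "real measure" +
  fixes \<alpha> :: "real \<Rightarrow> real" and C c t0 :: real
  assumes sets_M[measurable_cong]: "sets M = sets borel"
    and measurable_\<alpha>[measurable]: "\<alpha> \<in> borel_measurable M"
    and C_pos: "C > 0" and c_pos: "c > 0" and t0_pos: "t0 > 0"
    and interval_bounds: "\<And>x t. x \<in> measure_support M \<Longrightarrow> 0 < t \<Longrightarrow> t < t0 \<Longrightarrow>
           c * t powr \<alpha> x \<le> measure M {x - t/2 .. x + t/2}
         \<and> measure M {x - t/2 .. x + t/2} \<le> C * t powr \<alpha> x"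
begin

lemma eventually_small_scale:
  "\<forall>\<^sub>F t in at_right 0. 0 < t \<and> t < t0 \<and> t < 1"
  using eventually_at_right_real[of 0 "min t0 1"] t0_pos by (simp add: eventually_mono)

lemma alpha_nonneg:
  assumes x: "x \<in> measure_support M"
  shows "0 \<le> \<alpha> x"
proof (rule ccontr)
  assume "\<not> 0 \<le> \<alpha> x"
  then have "filterlim (\<lambda>t. c * t powr \<alpha> x) at_top (at_right 0)"
    using c_pos by real_asymp
  then have "\<forall>\<^sub>F t in at_right 0. 2 \<le> c * t powr \<alpha> x"
    by (simp add: filterlim_at_top)
  moreover have "\<forall>\<^sub>F t in at_right 0. c * t powr \<alpha> x \<le> 1"
    using eventually_small_scale
  proof eventually_elim
    case (elim t)
    then have "c * t powr \<alpha> x \<le> prob {x - t/2 .. x + t/2}"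
      using interval_bounds[OF x] by simp
    then show ?case
      using prob_le_1 by (rule order_trans)
  qed
  ultimately have "\<forall>\<^sub>F t in at_right (0::real). False"
    by eventually_elim simp
  then show False
    by simp
qed

lemma null_sets_alpha_ge_1_plus_eps:
  assumes "0 < \<epsilon>" "0 \<le> R"
  shows "{x \<in> measure_support M. 1 + \<epsilon> \<le> \<alpha> x \<and> \<bar>x\<bar> \<le> R} \<in> null_sets M"
proof -
  define E where "E = {x \<in> measure_support M. 1 + \<epsilon> \<le> \<alpha> x \<and> \<bar>x\<bar> \<le> R}"
  have E_sets: "E \<in> sets M"
  proof -
    have "E = measure_support M \<inter> {x \<in> space M. 1 + \<epsilon> \<le> \<alpha> x}
        \<inter> {x \<in> space M. \<bar>x\<bar> \<le> R}"
      by (auto simp: E_def sets_eq_imp_space_eq[OF sets_M])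
    also have "\<dots> \<in> sets M"
      using closed_measure_support[OF sets_M] by measurable
    finally show ?thesis .
  qed
  have piece: "measure M (E \<inter> {a .. a + t/2}) \<le> C * t powr (1 + \<epsilon>)"
    if t: "0 < t" "t < t0" "t \<le> 1" for t a
  proof (cases "E \<inter> {a .. a + t/2} = {}")
    case False
    then obtain x where x: "x \<in> E" "a \<le> x" "x \<le> a + t/2"
      by auto
    have "measure M (E \<inter> {a .. a + t/2}) \<le> measure M {x - t/2 .. x + t/2}"
      using x E_sets by (intro finite_measure_mono) auto
    also have "\<dots> \<le> C * t powr \<alpha> x"
      using interval_bounds[of x t] x t by (auto simp: E_def)
    also have "\<dots> \<le> C * t powr (1 + \<epsilon>)"
      using x t C_pos by (intro mult_left_mono powr_mono') (auto simp: E_def)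
    finally show ?thesis .
  qed (use C_pos in simp)
  have "\<forall>\<^sub>F t in at_right 0. measure M E \<le> (4 * R / t + 2) * (C * t powr (1 + \<epsilon>))"
    using eventually_small_scale
  proof eventually_elim
    case (elim t)
    have "E \<subseteq> {-R .. R}"
      by (auto simp: E_def abs_le_iff)
    then show ?case
      using measure_le_by_interval_cover[of M E R "t/2" "C * t powr (1 + \<epsilon>)"]
        finite_measure_axioms sets_M E_sets \<open>0 \<le> R\<close> piece elim
      by simp
  qed
  moreover have "((\<lambda>t. (4 * R / t + 2) * (C * t powr (1 + \<epsilon>))) \<longlongrightarrow> 0) (at_right 0)"
    using \<open>0 < \<epsilon>\<close> by real_asymp
  ultimately have "measure M E \<le> 0"
    by (intro tendsto_lowerbound) auto
  then show ?thesis
    using E_sets by (simp add: E_def[symmetric] null_sets_def emeasure_eq_measure measure_le_0_iff)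
qed

lemma AE_alpha_le_1: "AE x in M. \<alpha> x \<le> 1"
proof -
  have "AE x in M. \<forall>n m :: nat. x \<notin> {x \<in> measure_support M. 1 + 1 / Suc n \<le> \<alpha> x \<and> \<bar>x\<bar> \<le> m}"
    by (simp only: AE_all_countable) (intro allI AE_not_in null_sets_alpha_ge_1_plus_eps; simp)
  with AE_in_measure_support[OF sets_M] show ?thesis
  proof eventually_elim
    case (elim x)
    show "\<alpha> x \<le> 1"
    proof (rule ccontr)
      assume "\<not> \<alpha> x \<le> 1"
      then obtain n where "inverse (real (Suc n)) < \<alpha> x - 1"
        using reals_Archimedean[of "\<alpha> x - 1"] by auto
      moreover obtain m :: nat where "\<bar>x\<bar> \<le> m"
        using real_arch_simple by blast
      moreover have "x \<notin> {x \<in> measure_support M. 1 + 1 / Suc n \<le> \<alpha> x \<and> \<bar>x\<bar> \<le> m}"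
        using elim by blast
      ultimately show False
        using elim by (auto simp: inverse_eq_divide)
    qed
  qed
qed

lemma AE_alpha_bounds: "AE x in M. x \<in> measure_support M \<and> 0 \<le> \<alpha> x \<and> \<alpha> x \<le> 1"
  using AE_in_measure_support[OF sets_M] AE_alpha_le_1 by eventually_elim (simp add: alpha_nonneg)

lemma integrable_alpha: "integrable M \<alpha>"
  using AE_alpha_bounds by (intro integrable_const_bound[where B=1]) (auto elim: AE_mp)

lemma measure_interval_upper:
  assumes y: "y \<in> measure_support M" "0 \<le> \<alpha> y" "\<alpha> y \<le> 1" and t: "0 < t" "t \<le> 1" and "0 < w"
  shows "measure M {y - w .. y + w} \<le> max C (1 / t0) * t powr \<alpha> y * (1 + 2 * w / t)"
proof (cases "2 * w < t0")
  case True
  have "measure M {y - w .. y + w} \<le> C * (2 * w) powr \<alpha> y"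
    using interval_bounds[OF y(1), of "2 * w"] True \<open>0 < w\<close> by simp
  also have "(2 * w) powr \<alpha> y = t powr \<alpha> y * (2 * w / t) powr \<alpha> y"
    using t \<open>0 < w\<close> by (simp add: powr_divide)
  also have "(2 * w / t) powr \<alpha> y \<le> 1 + 2 * w / t"
  proof (cases "1 \<le> 2 * w / t")
    case True
    then have "(2 * w / t) powr \<alpha> y \<le> (2 * w / t) powr 1"
      using y by (intro powr_mono) auto
    then show ?thesis
      using t \<open>0 < w\<close> by simp
  next
    case False
    then have "(2 * w / t) powr \<alpha> y \<le> 1"
      using y t \<open>0 < w\<close> by (intro powr_le1) auto
    then show ?thesis
      using t \<open>0 < w\<close> by (simp add: add_increasing2)
  qed
  then have "C * (t powr \<alpha> y * (2 * w / t) powr \<alpha> y) \<le> max C (1 / t0) * (t powr \<alpha> y * (1 + 2 * w / t))"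
    using C_pos by (intro mult_mono) auto
  finally show ?thesis
    by (simp add: mult.assoc)
next
  case False
  have "t powr 1 \<le> t powr \<alpha> y"
    using y t by (intro powr_mono') auto
  then have "(1 / t0) * (t * (1 + 2 * w / t)) \<le> max C (1 / t0) * (t powr \<alpha> y * (1 + 2 * w / t))"
    using t \<open>0 < w\<close> t0_pos by (intro mult_mono) (auto simp: le_max_iff_disj)
  moreover have "t * (1 + 2 * w / t) = t + 2 * w"
    using t by (simp add: field_simps)
  then have "1 \<le> (1 / t0) * (t * (1 + 2 * w / t))"
    using False t t0_pos by (simp add: le_divide_eq_1)
  ultimately show ?thesis
    using prob_le_1[of "{y - w .. y + w}"] by (simp only: mult.assoc)
qed

lemma gauss_smooth_density_lower_regular:
  assumes y: "y \<in> measure_support M" and t: "0 < t" "t < t0"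
  shows "c * t powr \<alpha> y * normal_density 0 t (\<bar>x - y\<bar> + t/2) \<le> gauss_smooth_density M t x"
proof -
  have "c * t powr \<alpha> y * normal_density 0 t (\<bar>x - y\<bar> + t/2)
      \<le> measure M {y - t/2 .. y + t/2} * normal_density 0 t (\<bar>x - y\<bar> + t/2)"
    using interval_bounds[OF y t] by (intro mult_right_mono) auto
  also have "\<dots> \<le> gauss_smooth_density M t x"
    using t by (intro gauss_smooth_density_lower finite_measure_axioms sets_M) auto
  finally show ?thesis .
qed

lemma gauss_smooth_density_pos:
  assumes "0 < t" "t < t0"
  shows "0 < gauss_smooth_density M t x"
proof -
  obtain y where y: "y \<in> measure_support M"
    using measure_support_nonempty[OF prob_space_axioms sets_M] by blast
  have "0 < c * t powr \<alpha> y * normal_density 0 t (\<bar>x - y\<bar> + t/2)"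
    using c_pos assms by (simp add: normal_density_pos)
  then show ?thesis
    using gauss_smooth_density_lower_regular[OF y assms, of x] by linarith
qed

lemma ln_gauss_smooth_density_lower:
  assumes y: "y \<in> measure_support M" and t: "0 < t" "t < t0"
  shows "ln c - ln (sqrt (2 * pi)) - 1/4 + (\<alpha> y - 1) * ln t - ((x - y) / t)\<^sup>2
    \<le> ln (gauss_smooth_density M t x)"
proof -
  define v where "v = \<bar>x - y\<bar> + t/2"
  have "v\<^sup>2 \<le> 2 * (x - y)\<^sup>2 + t\<^sup>2 / 2"
    using sum_squares_ge_zero[of "\<bar>x - y\<bar> - t/2" 0]
    by (simp add: v_def power2_eq_square algebra_simps abs_mult_self_eq)
  then have v: "v\<^sup>2 / (2 * t\<^sup>2) \<le> ((x - y) / t)\<^sup>2 + 1/4"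
    using t by (simp add: field_simps power2_eq_square)
  have "ln c + (\<alpha> y - 1) * ln t - ln (sqrt (2 * pi)) - v\<^sup>2 / (2 * t\<^sup>2) =
      ln (c * t powr \<alpha> y * normal_density 0 t v)"
    using c_pos t by (simp add: normal_density_eq ln_mult ln_div ln_powr algebra_simps)
  also have "\<dots> \<le> ln (gauss_smooth_density M t x)"
    using gauss_smooth_density_lower_regular[OF y t, of x] c_pos t normal_density_pos[OF t(1)]
    by (intro ln_mono) (simp_all add: v_def)
  finally show ?thesis
    using v by linarith
qed

lemma gauss_smooth_density_upper_regular:
  assumes y: "y \<in> measure_support M" "0 \<le> \<alpha> y" "\<alpha> y \<le> 1" and t: "0 < t" "t < 1"
  shows "gauss_smooth_density M t x \<le> (max C (1 / t0) + 1) / sqrt (2 * pi) * t powr (\<alpha> y - 1)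
    * (1 + 2 * sqrt (2 * - ln t) + 2 * (\<bar>x - y\<bar> / t))"
proof -
  define K where "K = max C (1 / t0)"
  define r where "r = t * sqrt (2 * - ln t)"
  define u where "u = 1 + 2 * sqrt (2 * - ln t) + 2 * (\<bar>x - y\<bar> / t)"
  have r: "0 < r" and u: "1 \<le> u"
    using t by (simp_all add: r_def u_def)
  have "t powr 1 \<le> t powr \<alpha> y"
    using y t by (intro powr_mono') auto
  then have "t \<le> t powr \<alpha> y"
    using t by simp
  moreover have "t powr \<alpha> y * 1 \<le> t powr \<alpha> y * u"
    using u by (intro mult_left_mono) auto
  ultimately have "t \<le> t powr \<alpha> y * u"
    by linarith
  moreover have "measure M {x - r .. x + r} \<le> measure M {y - (r + \<bar>x - y\<bar>) .. y + (r + \<bar>x - y\<bar>)}"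
    by (intro finite_measure_mono) (auto simp: abs_if)
  moreover have "\<dots> \<le> K * t powr \<alpha> y * (1 + 2 * (r + \<bar>x - y\<bar>) / t)"
    unfolding K_def using y t r by (intro measure_interval_upper) auto
  moreover have "1 + 2 * (r + \<bar>x - y\<bar>) / t = u"
    using t by (simp add: r_def u_def field_simps)
  ultimately have "measure M {x - r .. x + r} + t \<le> (K + 1) * t powr \<alpha> y * u"
    by (simp add: distrib_right)
  then have "(measure M {x - r .. x + r} + t) / (t * sqrt (2 * pi)) \<le> (K + 1) * t powr \<alpha> y * u / (t * sqrt (2 * pi))"
    using t by (intro divide_right_mono) auto
  also have "\<dots> = (K + 1) / sqrt (2 * pi) * t powr (\<alpha> y - 1) * u"
    using t by (simp add: powr_diff)
  finally show ?thesis
    using gauss_smooth_density_upper[OF prob_space_axioms sets_M t, of x]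
    unfolding r_def K_def u_def by linarith
qed

lemma ln_gauss_smooth_density_upper:
  assumes y: "y \<in> measure_support M" "0 \<le> \<alpha> y" "\<alpha> y \<le> 1" and t: "0 < t" "t < t0" "t < 1"
  shows "ln (gauss_smooth_density M t x)
    \<le> ln ((max C (1 / t0) + 1) / sqrt (2 * pi)) + 1 + ln (1 + 2 * sqrt (2 * - ln t))
       + (\<alpha> y - 1) * ln t + ((x - y) / t)\<^sup>2"
proof -
  define a where "a = 1 + 2 * sqrt (2 * - ln t)"
  define d where "d = \<bar>x - y\<bar> / t"
  have a: "1 \<le> a" and d: "0 \<le> d"
    using t by (simp_all add: a_def d_def)
  have K: "0 < max C (1 / t0) + 1"
    using C_pos by (simp add: add_pos_nonneg le_max_iff_disj)
  have "ln (gauss_smooth_density M t x) \<le> ln ((max C (1 / t0) + 1) / sqrt (2 * pi) * t powr (\<alpha> y - 1) * (a + 2 * d))"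
    using gauss_smooth_density_upper_regular[OF y t(1,3), of x] gauss_smooth_density_pos[OF t(1,2)]
    unfolding a_def d_def by (intro ln_mono)
  also have "\<dots> = ln ((max C (1 / t0) + 1) / sqrt (2 * pi)) + (\<alpha> y - 1) * ln t + ln (a + 2 * d)"
    using K a d t by (simp add: ln_mult ln_powr del: times_divide_eq_left)
  also have "ln (a + 2 * d) \<le> ln a + 1 + d\<^sup>2"
    using a d by (rule ln_add_twice_le)
  also have "d\<^sup>2 = ((x - y) / t)\<^sup>2"
    by (simp add: d_def power_divide)
  finally show ?thesis
    by (simp add: a_def)
qed

lemma entropy_gauss_smooth_density_regular:
  assumes t: "0 < t" "t < t0" "t < 1"
  defines "p \<equiv> gauss_smooth_density M t"
    and "k\<^sub>1 \<equiv> ln c - ln (sqrt (2 * pi)) - 5/4"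
    and "k\<^sub>2 \<equiv> ln ((max C (1 / t0) + 1) / sqrt (2 * pi)) + 2"
  shows "integrable lborel (\<lambda>x. p x * ln (p x))"
    and "k\<^sub>1 + ((\<integral>y. \<alpha> y \<partial>M) - 1) * ln t \<le> (\<integral>x. p x * ln (p x) \<partial>lborel)"
    and "(\<integral>x. p x * ln (p x) \<partial>lborel)
      \<le> k\<^sub>2 + ln (1 + 2 * sqrt (2 * - ln t)) + ((\<integral>y. \<alpha> y \<partial>M) - 1) * ln t"
proof -
  define l u where "l = k\<^sub>1 + 1" and "u = k\<^sub>2 - 1 + ln (1 + 2 * sqrt (2 * - ln t))"
  have integrable_affine: "integrable M (\<lambda>y. k + (\<alpha> y - 1) * ln t)" for k
    using integrable_alpha by simp
  have integral_affine:
      "(\<integral>y. k + (\<alpha> y - 1) * ln t \<partial>M) = k + ((\<integral>y. \<alpha> y \<partial>M) - 1) * ln t" for k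
    using integrable_alpha by (simp add: algebra_simps prob_space)
  have "AE y in M. \<forall>x. (l + (\<alpha> y - 1) * ln t) - 1 * ((x - y) / t)\<^sup>2 \<le> ln (p x)
                      \<and> ln (p x) \<le> (u + (\<alpha> y - 1) * ln t) + 1 * ((x - y) / t)\<^sup>2"
    using AE_alpha_bounds
  proof eventually_elim
    case (elim y)
    then show ?case
      using ln_gauss_smooth_density_lower[of y t] ln_gauss_smooth_density_upper[of y t] t
      unfolding p_def l_def u_def k\<^sub>1_def k\<^sub>2_def by (auto simp: algebra_simps)
  qed
  note bounds = entropy_gauss_smooth_density_bounds[OF prob_space_axioms sets_M t(1)
      integrable_affine integrable_affine this[unfolded p_def], folded p_def]
  then show "integrable lborel (\<lambda>x. p x * ln (p x))"
    and "k\<^sub>1 + ((\<integral>y. \<alpha> y \<partial>M) - 1) * ln t \<le> (\<integral>x. p x * ln (p x) \<partial>lborel)"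
    and "(\<integral>x. p x * ln (p x) \<partial>lborel)
      \<le> k\<^sub>2 + ln (1 + 2 * sqrt (2 * - ln t)) + ((\<integral>y. \<alpha> y \<partial>M) - 1) * ln t"
    by (simp_all add: integral_affine l_def u_def)
qed

theorem delta_c_eq_integral: "delta_c M = ereal (\<integral>x. \<alpha> x \<partial>M)"
proof (rule delta_c_eqI)
  show "\<forall>\<^sub>F t in at_right 0.
      integrable lborel (\<lambda>x. gauss_smooth_density M t x * ln (gauss_smooth_density M t x))"
    using eventually_small_scale by eventually_elim (intro entropy_gauss_smooth_density_regular(1); simp)
  show "((\<lambda>t. (\<integral>x. gauss_smooth_density M t x * ln (gauss_smooth_density M t x) \<partial>lborel) / \<bar>ln t\<bar>)
      \<longlongrightarrow> 1 - (\<integral>x. \<alpha> x \<partial>M)) (at_right 0)"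
    using eventually_small_scale
    by (rule tendsto_div_abs_ln_at_right_0[OF eventually_mono])
      (blast intro: entropy_gauss_smooth_density_regular(2,3))
qed

end

theorem corollary3p2:
  fixes \<mu> :: "real measure" and \<alpha> :: "real \<Rightarrow> real" and C c t0 :: real
  assumes "prob_space \<mu>" and "sets \<mu> = sets borel"
    and "\<alpha> \<in> borel_measurable \<mu>"
    and "C > 0" and "c > 0" and "t0 > 0"
    and "\<And>x t. x \<in> measure_support \<mu> \<Longrightarrow> 0 < t \<Longrightarrow> t < t0 \<Longrightarrow>
           c * t powr \<alpha> x \<le> measure \<mu> {x - t/2 .. x + t/2}
         \<and> measure \<mu> {x - t/2 .. x + t/2} \<le> C * t powr \<alpha> x"
  shows "integrable \<mu> \<alpha> \<and> delta_c \<mu> = ereal (\<integral>x. \<alpha> x \<partial>\<mu>)"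
proof -
  interpret dimension_regular \<mu> \<alpha> C c t0
    by (intro dimension_regular.intro dimension_regular_axioms.intro) (fact assms)+
  show ?thesis
    using integrable_alpha delta_c_eq_integral by simp
qed

end
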